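(* Let $n\ge2\times10^3$, let $m=(n-1)/2$ if $n$ is odd and $m=n/2-1$ if $n$ is even, with $0.247m,0.339m,0.414m$ integers, and let $T=\{f_1,\dots,f_k\}\subset[0,1)$ have wrap-around minimum separation at least $2.52/(n-1)$. Then there is a fixed numerical constant $C_{\bar v}$ (independent of $n$, $k$, $T$) such that $\|\bar v_\ell(f)\|_2\le C_{\bar v}$ for all $f\in[0,1]$ and all $\ell\in\{0,1,2,3\}$.
   Context: $\bar K=\mathcal{D}_{0.247m}\mathcal{D}_{0.339m}\mathcal{D}_{0.414m}$ with $\mathcal{D}_{\tilde m}(f)=\frac{1}{2\tilde m+1}\sum_{l=-\tilde m}^{\tilde m}e^{i2\pi lf}$; $\kappa=|\bar K''(0)|^{-1/2}$; $\bar K^{(\ell)}$ is the $\ell$-th derivative. $\bar v_\ell(f)=\kappa^\ell\big(\bar K^{(\ell)}(f-f_1),\dots,\bar K^{(\ell)}(f-f_k),\ \kappa\bar K^{(\ell+1)}(f-f_1),\dots,\kappa\bar K^{(\ell+1)}(f-f_k)\big)^T\in\mathbb{C}^{2k}$. *)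

theory Defs
  imports "HOL-Analysis.Analysis"
begin

definition dirichlet :: "int \<Rightarrow> real \<Rightarrow> complex" where
  "dirichlet mt f = (1 / of_int (2 * mt + 1)) *
     (\<Sum>l\<in>{-mt..mt}. exp (\<i> * 2 * of_real pi * of_int l * of_real f))"

definition m_of :: "nat \<Rightarrow> nat" where
  "m_of n = (if odd n then (n - 1) div 2 else n div 2 - 1)"

text \<open>The kernel K-bar = D_{0.247m} D_{0.339m} D_{0.414m} (indices meant to be integers).\<close>
definition Kbar :: "nat \<Rightarrow> real \<Rightarrow> complex" where
  "Kbar n f = dirichlet \<lfloor>0.247 * real (m_of n)\<rfloor> f *
              dirichlet \<lfloor>0.339 * real (m_of n)\<rfloor> f *
              dirichlet \<lfloor>0.414 * real (m_of n)\<rfloor> f"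

definition higher_deriv :: "nat \<Rightarrow> (real \<Rightarrow> complex) \<Rightarrow> real \<Rightarrow> complex" where
  "higher_deriv l g = ((\<lambda>h x. vector_derivative h (at x)) ^^ l) g"

definition kappa :: "nat \<Rightarrow> real" where
  "kappa n = (norm (higher_deriv 2 (Kbar n) 0)) powr (-1/2)"

text \<open>Euclidean norm of v_l(f) in C^{2k}, with the k entries indexed by the points of T.\<close>
definition vbar_norm :: "nat \<Rightarrow> real set \<Rightarrow> nat \<Rightarrow> real \<Rightarrow> real" where
  "vbar_norm n T l f = sqrt (\<Sum>t\<in>T.
      (norm (complex_of_real (kappa n ^ l) * higher_deriv l (Kbar n) (f - t)))\<^sup>2 +
      (norm (complex_of_real (kappa n ^ l * kappa n) * higher_deriv (Suc l) (Kbar n) (f - t)))\<^sup>2)"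

definition wrap_dist :: "real \<Rightarrow> real \<Rightarrow> real" where
  "wrap_dist x y = \<bar>(x - y) - of_int (round (x - y))\<bar>"

end

theory Submission
  imports Defs
begin

text \<open>
  Write e(x) = exp(2 pi i x). The kernel K is a trigonometric polynomial whose frequencies
  p + q + r (|p| \<le> a, |q| \<le> b, |r| \<le> c) are bounded by a + b + c = m, so its j-th derivative
  is at most (2 pi m)^j. Summing by parts in the innermost index r against the geometric sums
  of e(x) gains a factor 1/(c |1 - e(x)|), and |1 - e(x)| dominates the distance from x to
  the nearest integer. Since K''(0) is minus a sum of squared frequencies, |K''(0)| \<ge> c^2,
  i.e. kappa \<le> 1/c; hence kappa^j |K^(j)(x)| is O(1/(1 + c dist(x, Z))) with c \<ge> m/3.
  A separation of 2.52/(n-1) \<ge> 1/(3c) puts the points f - t in distinct cells of width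
  1/(3c), so the squared norm of v_l(f) is dominated by the convergent sum of 1/(1 + k^2).
\<close>

definition trig_poly :: "('a \<Rightarrow> complex) \<Rightarrow> ('a \<Rightarrow> real) \<Rightarrow> 'a set \<Rightarrow> real \<Rightarrow> complex" where
  "trig_poly c w S x = (\<Sum>p\<in>S. c p * exp (\<i> * of_real (2*pi*w p) * of_real x))"

lemma trig_poly_has_vector_derivative:
  "(trig_poly c w S has_vector_derivative
      trig_poly (\<lambda>p. c p * (\<i> * of_real (2*pi*w p))) w S x) (at x)"
proof -
  have "((\<lambda>x. c p * exp (\<i> * of_real (2*pi*w p) * of_real x)) has_vector_derivative
        c p * (\<i> * of_real (2*pi*w p)) * exp (\<i> * of_real (2*pi*w p) * of_real x)) (at x)" for p
  proof -
    have "((\<lambda>z. c p * exp (\<i> * of_real (2*pi*w p) * z)) has_field_derivative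
        c p * (exp (\<i> * of_real (2*pi*w p) * of_real x) * (\<i> * of_real (2*pi*w p)))) (at (of_real x))"
      by (auto intro!: derivative_eq_intros)
    from has_vector_derivative_real_field[OF this] show ?thesis by (simp add: ac_simps)
  qed
  then show ?thesis unfolding trig_poly_def[abs_def]
    by (auto intro!: has_vector_derivative_sum simp: mult.assoc)
qed

lemma higher_deriv_trig_poly:
  "higher_deriv j (trig_poly c w S) = trig_poly (\<lambda>p. c p * (\<i> * of_real (2*pi*w p))^j) w S"
proof (induction j)
  case 0
  then show ?case by (simp add: higher_deriv_def)
next
  case (Suc j)
  have "higher_deriv (Suc j) (trig_poly c w S) =
      (\<lambda>x. vector_derivative (higher_deriv j (trig_poly c w S)) (at x))"
    by (simp add: higher_deriv_def)
  also have "\<dots> = trig_poly (\<lambda>p. c p * (\<i> * of_real (2*pi*w p))^j * (\<i> * of_real (2*pi*w p))) w S"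
    unfolding Suc by (rule ext, rule vector_derivative_at, rule trig_poly_has_vector_derivative)
  finally show ?case by (simp only: power_Suc2 mult.assoc)
qed

lemma trig_poly_mult:
  "trig_poly c1 w1 S1 x * trig_poly c2 w2 S2 x =
     trig_poly (\<lambda>(p,q). c1 p * c2 q) (\<lambda>(p,q). w1 p + w2 q) (S1 \<times> S2) x"
  unfolding trig_poly_def sum_product sum.cartesian_product
  by (rule sum.cong[OF refl]) (auto simp: algebra_simps exp_add[symmetric])

lemma dirichlet_eq_trig_poly:
  "dirichlet mt = trig_poly (\<lambda>_. 1 / of_int (2*mt+1)) real_of_int {-mt..mt}"
  unfolding dirichlet_def trig_poly_def[abs_def]
  by (rule ext) (simp add: sum_distrib_left algebra_simps)

lemma summation_by_parts:
  fixes g :: "nat \<Rightarrow> real" and u :: "nat \<Rightarrow> complex"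
  shows "(\<Sum>k\<le>N. of_real (g k) * u k) =
    of_real (g N) * (\<Sum>i\<le>N. u i) - (\<Sum>k<N. of_real (g (Suc k) - g k) * (\<Sum>i\<le>k. u i))"
proof (induction N)
  case 0
  then show ?case by simp
next
  case (Suc N)
  show ?case unfolding sum.atMost_Suc sum.lessThan_Suc Suc by (simp add: algebra_simps)
qed

lemma norm_sum_mult_le_variation:
  fixes g :: "nat \<Rightarrow> real" and u :: "nat \<Rightarrow> complex"
  assumes "\<And>r. r \<le> N \<Longrightarrow> norm (\<Sum>i\<le>r. u i) \<le> B"
  shows "norm (\<Sum>k\<le>N. of_real (g k) * u k) \<le> B * (\<bar>g N\<bar> + (\<Sum>k<N. \<bar>g (Suc k) - g k\<bar>))"
proof -
  have "norm (\<Sum>k\<le>N. of_real (g k) * u k) \<le> norm (of_real (g N) * (\<Sum>i\<le>N. u i))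
      + norm (\<Sum>k<N. of_real (g (Suc k) - g k) * (\<Sum>i\<le>k. u i))"
    unfolding summation_by_parts by (rule norm_triangle_ineq4)
  also have "norm (of_real (g N) * (\<Sum>i\<le>N. u i)) \<le> \<bar>g N\<bar> * B"
    unfolding norm_mult norm_of_real by (rule mult_left_mono, rule assms, auto)
  also have "norm (\<Sum>k<N. of_real (g (Suc k) - g k) * (\<Sum>i\<le>k. u i)) \<le>
      (\<Sum>k<N. \<bar>g (Suc k) - g k\<bar> * B)"
    by (rule order_trans[OF norm_sum], rule sum_mono)
      (auto simp flip: of_real_diff simp: norm_mult intro!: mult_left_mono assms)
  finally show ?thesis by (simp add: sum_distrib_left algebra_simps)
qed

lemma norm_geometric_sum_mult_le:
  fixes z :: complex
  assumes "norm z = 1"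
  shows "norm (\<Sum>i\<le>r. z^i) * norm (1 - z) \<le> 2"
proof -
  have "norm (\<Sum>i\<le>r. z^i) * norm (1 - z) = norm (1 - z ^ Suc r)"
    using sum_gp_basic[of z r] by (metis mult.commute norm_mult)
  also have "\<dots> \<le> norm (1::complex) + norm (z ^ Suc r)" by (rule norm_triangle_ineq4)
  also have "\<dots> = 2" using assms by (simp add: norm_power norm_mult)
  finally show ?thesis .
qed

lemma abs_power_diff_le:
  fixes x y L :: real
  assumes "\<bar>x\<bar> \<le> L" "\<bar>y\<bar> \<le> L"
  shows "\<bar>x^j - y^j\<bar> \<le> real j * L^(j - 1) * \<bar>x - y\<bar>"
proof (induction j)
  case 0
  then show ?case by simp
next
  case (Suc j)
  have L0: "0 \<le> L" using assms by linarith
  have "x^Suc j - y^Suc j = x * (x^j - y^j) + y^j * (x - y)" by (simp add: algebra_simps)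
  then have "\<bar>x^Suc j - y^Suc j\<bar> \<le> \<bar>x\<bar> * \<bar>x^j - y^j\<bar> + \<bar>y\<bar>^j * \<bar>x - y\<bar>"
    by (metis abs_mult abs_triangle_ineq power_abs)
  also have "\<dots> \<le> L * (real j * L^(j - 1) * \<bar>x - y\<bar>) + L^j * \<bar>x - y\<bar>"
    by (intro add_mono mult_mono Suc power_mono) (use assms L0 in auto)
  also have "L * (real j * L^(j - 1) * \<bar>x - y\<bar>) = real j * L^j * \<bar>x - y\<bar>"
    by (cases j) (auto simp: algebra_simps)
  finally show ?case by (simp add: algebra_simps)
qed

lemma norm_1_minus_exp_2pi:
  "norm (1 - exp (\<i> * of_real (2*pi*x))) = 2 * \<bar>sin (pi*x)\<bar>"
proof -
  have e: "exp (\<i> * of_real (2*pi*x)) = Complex (cos (2*pi*x)) (sin (2*pi*x))"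
    by (subst cis_conv_exp[symmetric]) (simp add: complex_eq_iff)
  have "(norm (1 - exp (\<i> * of_real (2*pi*x))))^2 = (1 - cos (2*pi*x))^2 + (sin (2*pi*x))^2"
    unfolding e by (simp add: cmod_def)
  also have "\<dots> = 2 - 2 * cos (2*(pi*x))"
    using sin_cos_squared_add[of "2*pi*x"] by (simp add: power2_eq_square algebra_simps)
  also have "\<dots> = (2 * \<bar>sin (pi*x)\<bar>)^2" unfolding cos_double_sin by (simp add: power2_eq_square)
  finally show ?thesis by (subst (asm) power2_eq_iff_nonneg) auto
qed

lemma abs_le_abs_sin_pi:
  fixes x :: real
  assumes "\<bar>x\<bar> \<le> 1/2"
  shows "\<bar>x\<bar> \<le> \<bar>sin (pi*x)\<bar>"
proof -
  define y where "y = pi * \<bar>x\<bar>"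
  have y0: "0 \<le> y" by (auto simp: y_def)
  have "pi * \<bar>x\<bar> \<le> 4 * (1/2)" using assms pi_less_4 by (intro mult_mono) auto
  then have y2: "y \<le> 2" by (simp add: y_def)
  have "\<bar>sin y - y\<bar> \<le> inverse 6 * \<bar>y\<bar>^3"
    using Maclaurin_sin_bound[of y 3] by (simp add: sin_coeff_def numeral_3_eq_3 fact_numeral)
  then have "sin y \<ge> y - y^3/6" using y0 abs_ge_minus_self[of "sin y - y"] by simp
  moreover have "y^3 \<le> 4 * y"
    using mult_left_mono[OF power_mono[OF y2 y0, of 2] y0] by (simp add: power3_eq_cube power2_eq_square)
  moreover have "\<bar>x\<bar> \<le> y/3"
    using mult_right_mono[OF less_imp_le[OF pi_gt3], of "\<bar>x\<bar>"] unfolding y_def by simp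
  moreover have "\<bar>sin (pi*x)\<bar> = \<bar>sin y\<bar>"
    unfolding y_def by (cases "x \<ge> 0") (auto simp: abs_mult)
  ultimately show ?thesis by linarith
qed

lemma exp_2pi_round:
  "exp (\<i> * of_real (2*pi*x)) = exp (\<i> * of_real (2*pi*(x - of_int (round x))))"
proof -
  have "exp (\<i> * of_real (2*pi*x)) =
      exp (\<i> * of_real (2*pi*(x - of_int (round x))) + \<i> * (of_int (round x) * (of_real pi * 2)))"
    by (simp add: algebra_simps)
  then show ?thesis by (simp only: exp_plus_2pin)
qed

lemma dist_round_le_norm_1_minus_exp_2pi:
  "\<bar>x - of_int (round x)\<bar> \<le> norm (1 - exp (\<i> * of_real (2*pi*x)))"
proof -
  have "\<bar>x - of_int (round x)\<bar> \<le> 1/2" using of_int_round_abs_le[of x] by linarith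
  from abs_le_abs_sin_pi[OF this] show ?thesis
    unfolding exp_2pi_round[of x] norm_1_minus_exp_2pi by linarith
qed

lemma sum_int_interval_reindex:
  fixes M :: int
  assumes "0 \<le> M"
  shows "(\<Sum>r\<in>{-M..M}. F r) = (\<Sum>k\<le>nat (2*M). F (int k - M))"
  by (rule sum.reindex_bij_witness[where i="\<lambda>k. int k - M" and j="\<lambda>r. nat (r+M)"])
    (use assms in auto)

text \<open>The weights \<open>(s + r)^j\<close> have total variation \<open>O(j L^j)\<close> on a block of length \<open>2M+1 \<le> 2L\<close>,
  so summation by parts against the geometric sums of \<open>exp(2 pi i x)\<close> costs only the factor
  \<open>1/|1 - exp(2 pi i x)|\<close>.\<close>
lemma norm_moment_sum_mult_le:
  fixes M s :: int and L x :: real and j :: nat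
  assumes M0: "0 \<le> M" and bnd: "\<And>r. r \<in> {-M..M} \<Longrightarrow> \<bar>real_of_int (s + r)\<bar> \<le> L"
  shows "norm (\<Sum>r\<in>{-M..M}. of_real (real_of_int (s + r) ^ j) *
            exp (\<i> * of_real (2*pi*real_of_int (s+r)) * of_real x))
          * norm (1 - exp (\<i> * of_real (2*pi*x))) \<le> 2 * (1 + 2 * real j) * L^j"
proof -
  define N where "N = nat (2*M)"
  define z where "z = exp (\<i> * of_real (2*pi*x))"
  define E0 where "E0 = exp (\<i> * of_real (2*pi*real_of_int (s - M)) * of_real x)"
  define g where "g k = real_of_int (s - M + int k) ^ j" for k
  define u where "u k = E0 * z ^ k" for k
  have L0: "0 \<le> L" using bnd[of M] M0 by force
  have norm_z: "norm z = 1" unfolding z_def by (simp only: norm_exp_i_times)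
  have norm_E0: "norm E0 = 1" unfolding E0_def by (metis mult.assoc norm_exp_i_times of_real_mult)
  have sum_eq: "(\<Sum>r\<in>{-M..M}. of_real (real_of_int (s + r) ^ j) *
        exp (\<i> * of_real (2*pi*real_of_int (s+r)) * of_real x)) = (\<Sum>k\<le>N. of_real (g k) * u k)"
    unfolding sum_int_interval_reindex[OF M0] N_def
  proof (rule sum.cong[OF refl])
    fix k
    have "exp (\<i> * of_real (2*pi*real_of_int (s + (int k - M))) * of_real x)
        = exp (\<i> * of_real (2*pi*real_of_int (s - M)) * of_real x + of_nat k * (\<i> * of_real (2*pi*x)))"
      by (simp add: algebra_simps)
    also have "\<dots> = u k" unfolding u_def E0_def z_def exp_add exp_of_nat_mult ..
    finally show "of_real (real_of_int (s + (int k - M)) ^ j) *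
        exp (\<i> * of_real (2*pi*real_of_int (s + (int k - M))) * of_real x) = of_real (g k) * u k"
      unfolding g_def by (simp add: algebra_simps)
  qed
  have g_arg_bound: "\<bar>real_of_int (s - M + int k)\<bar> \<le> L" if "k \<le> N" for k
    using bnd[of "int k - M"] that M0 unfolding N_def by (auto simp: algebra_simps)
  have variation: "\<bar>g N\<bar> + (\<Sum>k<N. \<bar>g (Suc k) - g k\<bar>) \<le> (1 + 2 * real j) * L^j"
  proof -
    have "\<bar>g N\<bar> \<le> L^j" unfolding g_def power_abs by (rule power_mono[OF g_arg_bound]) auto
    moreover have "(\<Sum>k<N. \<bar>g (Suc k) - g k\<bar>) \<le> (\<Sum>k<N. real j * L^(j-1))"
    proof (rule sum_mono)
      fix k assume "k \<in> {..<N}"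
      then have "Suc k \<le> N" "k \<le> N" by auto
      from abs_power_diff_le[OF g_arg_bound[OF this(1)] g_arg_bound[OF this(2)], of j]
      show "\<bar>g (Suc k) - g k\<bar> \<le> real j * L^(j-1)" unfolding g_def by simp
    qed
    moreover have "(\<Sum>k<N. real j * L^(j-1)) \<le> 2 * real j * L^j"
    proof (cases j)
      case (Suc j')
      have "real N \<le> 2 * L" using bnd[of M] bnd[of "-M"] M0 unfolding N_def by auto
      then have "real j * (real N * L^j') \<le> real j * (2 * L * L^j')"
        using L0 by (intro mult_left_mono mult_right_mono) auto
      then show ?thesis using Suc by (simp add: algebra_simps)
    qed simp
    ultimately show ?thesis by (simp add: algebra_simps)
  qed
  show ?thesis
  proof (cases "z = 1")
    case True
    then show ?thesis unfolding z_def[symmetric] using L0 by simp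
  next
    case False
    then have pos: "0 < norm (1 - z)" by simp
    have partial_sums: "norm (\<Sum>i\<le>r. u i) \<le> 2 / norm (1 - z)" for r
    proof -
      have "norm (\<Sum>i\<le>r. u i) = norm (\<Sum>i\<le>r. z^i)"
        unfolding u_def sum_distrib_left[symmetric] norm_mult norm_E0 by simp
      with norm_geometric_sum_mult_le[OF norm_z, of r] pos show ?thesis by (simp add: field_simps)
    qed
    have "norm (\<Sum>k\<le>N. of_real (g k) * u k) \<le> 2 / norm (1 - z) * ((1 + 2 * real j) * L^j)"
      by (rule order_trans[OF norm_sum_mult_le_variation[OF partial_sums]],
          rule mult_left_mono[OF variation])
        (use pos in auto)
    then show ?thesis unfolding sum_eq z_def[symmetric] using pos by (simp add: field_simps)
  qed
qed

definition dirichlet3 :: "int \<Rightarrow> int \<Rightarrow> int \<Rightarrow> real \<Rightarrow> complex" where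
  "dirichlet3 a b c x = dirichlet a x * dirichlet b x * dirichlet c x"

definition dirichlet3_weight :: "int \<Rightarrow> int \<Rightarrow> int \<Rightarrow> real" where
  "dirichlet3_weight a b c = 1 / (real_of_int (2*a+1) * real_of_int (2*b+1) * real_of_int (2*c+1))"

lemma higher_deriv_dirichlet3:
  "higher_deriv j (dirichlet3 a b c) x = (\<Sum>pq\<in>{-a..a} \<times> {-b..b}. \<Sum>r\<in>{-c..c}.
      of_real (dirichlet3_weight a b c) * (\<i> * of_real (2*pi*real_of_int (fst pq + snd pq + r)))^j *
      exp (\<i> * of_real (2*pi*real_of_int (fst pq + snd pq + r)) * of_real x))"
proof -
  have eq: "dirichlet3 a b c = trig_poly (\<lambda>_. of_real (dirichlet3_weight a b c))
      (\<lambda>((p,q),r). real_of_int (p + q + r)) (({-a..a} \<times> {-b..b}) \<times> {-c..c})"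
    unfolding dirichlet3_def[abs_def] dirichlet_eq_trig_poly trig_poly_mult
    unfolding trig_poly_def dirichlet3_weight_def
    by (intro ext sum.cong refl) auto
  show ?thesis
    unfolding eq higher_deriv_trig_poly trig_poly_def sum.cartesian_product
    by (intro sum.cong refl) auto
qed

lemma norm_exp_term:
  "norm (C * (\<i> * of_real u)^j * exp (\<i> * of_real u * of_real x)) = norm C * \<bar>u\<bar>^j"
proof -
  have "exp (\<i> * of_real u * of_real x) = exp (\<i> * of_real (u*x))" by (simp add: mult.assoc)
  then show ?thesis by (simp only: norm_mult norm_power norm_of_real norm_ii norm_exp_i_times) simp
qed

lemma norm_higher_deriv_dirichlet3_le:
  assumes "0 \<le> a" "0 \<le> b" "0 \<le> c"
  shows "norm (higher_deriv j (dirichlet3 a b c) x) \<le> (2*pi*real_of_int (a+b+c))^j"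
proof -
  let ?m = "real_of_int (a+b+c)" and ?w = "dirichlet3_weight a b c"
  have "norm (higher_deriv j (dirichlet3 a b c) x) \<le>
      (\<Sum>pq\<in>{-a..a} \<times> {-b..b}. \<Sum>r\<in>{-c..c}. ?w * (2*pi*?m)^j)"
    unfolding higher_deriv_dirichlet3
  proof (intro order_trans[OF norm_sum] sum_mono)
    fix pq r assume pq: "pq \<in> {-a..a} \<times> {-b..b}" and r: "r \<in> {-c..c}"
    have "\<bar>real_of_int (fst pq + snd pq + r)\<bar> \<le> ?m" using pq r by (cases pq) auto
    then have "(2*pi*\<bar>real_of_int (fst pq + snd pq + r)\<bar>)^j \<le> (2*pi*?m)^j"
      by (intro power_mono mult_left_mono) auto
    moreover have "0 \<le> ?w" using assms by (simp add: dirichlet3_weight_def)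
    ultimately show "norm (of_real ?w * (\<i> * of_real (2*pi*real_of_int (fst pq + snd pq + r)))^j *
        exp (\<i> * of_real (2*pi*real_of_int (fst pq + snd pq + r)) * of_real x)) \<le> ?w * (2*pi*?m)^j"
      unfolding norm_exp_term by (simp add: abs_mult mult_left_mono)
  qed
  also have "\<dots> = (2*pi*?m)^j"
    using assms by (simp add: dirichlet3_weight_def card_cartesian_product)
  finally show ?thesis .
qed

lemma norm_higher_deriv_dirichlet3_mult_le:
  assumes a: "0 \<le> a" and b: "0 \<le> b" and c: "0 \<le> c"
  shows "norm (higher_deriv j (dirichlet3 a b c) x) * norm (1 - exp (\<i> * of_real (2*pi*x)))
     \<le> 2 * (1 + 2 * real j) * (2*pi*real_of_int (a+b+c))^j / real_of_int (2*c+1)"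
proof -
  let ?m = "real_of_int (a+b+c)" and ?w = "dirichlet3_weight a b c"
    and ?E = "norm (1 - exp (\<i> * of_real (2*pi*x)))"
  define moment where "moment s = (\<Sum>r\<in>{-c..c}. of_real (real_of_int (s + r) ^ j) *
       exp (\<i> * of_real (2*pi*real_of_int (s+r)) * of_real x))" for s
  have w0: "0 \<le> ?w" using a b c by (simp add: dirichlet3_weight_def)
  have "higher_deriv j (dirichlet3 a b c) x = (\<Sum>pq\<in>{-a..a} \<times> {-b..b}.
      of_real ?w * (\<i>^j * of_real ((2*pi)^j)) * moment (fst pq + snd pq))"
    unfolding higher_deriv_dirichlet3 moment_def sum_distrib_left
    by (intro sum.cong refl)
      (simp only: power_mult_distrib of_real_mult of_real_power mult.assoc)
  then have "norm (higher_deriv j (dirichlet3 a b c) x) * ?E \<le>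
      (\<Sum>pq\<in>{-a..a} \<times> {-b..b}. norm (of_real ?w * (\<i>^j * of_real ((2*pi)^j)) * moment (fst pq + snd pq))) * ?E"
    by (simp only:) (rule mult_right_mono[OF norm_sum], simp)
  also have "\<dots> = (\<Sum>pq\<in>{-a..a} \<times> {-b..b}. ?w * (2*pi)^j * (norm (moment (fst pq + snd pq)) * ?E))"
    using w0 unfolding sum_distrib_right by (intro sum.cong refl) (simp add: norm_mult norm_power)
  also have "\<dots> \<le> (\<Sum>pq\<in>{-a..a} \<times> {-b..b}. ?w * (2*pi)^j * (2 * (1 + 2 * real j) * ?m^j))"
  proof (intro sum_mono mult_left_mono)
    fix pq assume "pq \<in> {-a..a} \<times> {-b..b}"
    then show "norm (moment (fst pq + snd pq)) * ?E \<le> 2 * (1 + 2 * real j) * ?m^j"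
      unfolding moment_def by (intro norm_moment_sum_mult_le[OF c]) (cases pq, auto)
  qed (use a b c in \<open>auto simp: dirichlet3_weight_def\<close>)
  also have "\<dots> = real (card ({-a..a} \<times> {-b..b})) * ?w * (2 * (1 + 2 * real j) * (2*pi*?m)^j)"
    unfolding power_mult_distrib[of "2*pi" ?m] by (simp add: mult_ac)
  also have "real (card ({-a..a} \<times> {-b..b})) * ?w = 1 / real_of_int (2*c+1)"
    using a b by (simp add: card_cartesian_product dirichlet3_weight_def)
  finally show ?thesis by simp
qed

lemma sum_sq_int_interval:
  "(\<Sum>r\<in>{- int k..int k}. (real_of_int r)^2) = real k * (real k + 1) * (2 * real k + 1) / 3"
proof (induction k)
  case 0
  then show ?case by simp
next
  case (Suc k)
  have "{- int (Suc k)..int (Suc k)} = insert (int (Suc k)) (insert (- int (Suc k)) {- int k..int k})"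
    by auto
  then show ?case using Suc by (simp add: field_simps power2_eq_square)
qed

lemma sum_sq_int_interval_le_shifted:
  "(\<Sum>r\<in>{-M..M}. (real_of_int r)^2) \<le> (\<Sum>r\<in>{-M..M}. (real_of_int (s + r))^2)"
proof -
  have "(\<Sum>r\<in>{-M..M}. real_of_int r) = (\<Sum>r\<in>{-M..M}. real_of_int (-r))"
    by (rule sum.reindex_bij_witness[where i=uminus and j=uminus]) auto
  then have "(\<Sum>r\<in>{-M..M}. real_of_int r) = 0" by (simp add: sum_negf)
  moreover have "(\<Sum>r\<in>{-M..M}. (real_of_int (s + r))^2) =
     (\<Sum>r\<in>{-M..M}. (real_of_int r)^2) + 2 * real_of_int s * (\<Sum>r\<in>{-M..M}. real_of_int r)
       + (\<Sum>r\<in>{-M..M}. (real_of_int s)^2)"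
    by (simp add: sum.distrib sum_distrib_left power2_eq_square algebra_simps)
  ultimately show ?thesis by (simp add: sum_nonneg)
qed

lemma sq_le_norm_higher_deriv2_dirichlet3:
  assumes a: "0 \<le> a" and b: "0 \<le> b" and c: "0 \<le> c"
  shows "(real_of_int c)^2 \<le> norm (higher_deriv 2 (dirichlet3 a b c) 0)"
proof -
  let ?w = "dirichlet3_weight a b c" and ?c = "real_of_int c"
  define Q where "Q = (\<Sum>pq\<in>{-a..a} \<times> {-b..b}. \<Sum>r\<in>{-c..c}. (real_of_int (fst pq + snd pq + r))^2)"
  have w0: "0 \<le> ?w" using a b c by (simp add: dirichlet3_weight_def)
  have Q0: "0 \<le> Q" unfolding Q_def by (intro sum_nonneg) auto
  have "higher_deriv 2 (dirichlet3 a b c) 0 = (\<Sum>pq\<in>{-a..a} \<times> {-b..b}. \<Sum>r\<in>{-c..c}.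
       of_real (- (4 * pi^2 * ?w * (real_of_int (fst pq + snd pq + r))^2)))"
    unfolding higher_deriv_dirichlet3 by (simp add: power_mult_distrib power2_eq_square algebra_simps)
  also have "\<dots> = - of_real (4 * pi^2 * ?w * Q)"
    unfolding Q_def of_real_sum[symmetric] sum_negf sum_distrib_left by simp
  finally have "norm (higher_deriv 2 (dirichlet3 a b c) 0) = \<bar>4 * pi^2 * ?w * Q\<bar>"
    by (simp only: norm_minus_cancel norm_of_real)
  then have norm_eq: "norm (higher_deriv 2 (dirichlet3 a b c) 0) = 4 * pi^2 * ?w * Q"
    using w0 Q0 by simp
  let ?S = "real_of_int (2*a+1) * real_of_int (2*b+1) * (?c * (?c + 1) * (2 * ?c + 1) / 3)"
  have S_le_Q: "?S \<le> Q"
  proof -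
    have "(\<Sum>pq\<in>{-a..a} \<times> {-b..b}. \<Sum>r\<in>{-c..c}. (real_of_int r)^2) \<le> Q"
      unfolding Q_def
      by (rule sum_mono) (use sum_sq_int_interval_le_shifted[of c "fst _ + snd _"] in \<open>simp add: add.assoc\<close>)
    moreover have "(\<Sum>r\<in>{-c..c}. (real_of_int r)^2) = ?c * (?c + 1) * (2 * ?c + 1) / 3"
      using c sum_sq_int_interval[of "nat c"] by simp
    ultimately show ?thesis using a b by (simp add: card_cartesian_product)
  qed
  have weight_S: "?w * ?S = ?c * (?c + 1) / 3"
  proof -
    have "1 / (A * B * C) * (A * B * (y * (y + 1) * C / 3)) = y * (y + 1) / 3"
      if "A \<noteq> 0" "B \<noteq> 0" "C \<noteq> 0" for A B C y :: real
      using that by simp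
    moreover have "real_of_int (2*a+1) \<noteq> 0" "real_of_int (2*b+1) \<noteq> 0" "2 * ?c + 1 \<noteq> 0"
      using a b c by linarith+
    ultimately show ?thesis unfolding dirichlet3_weight_def by simp
  qed
  have "1 \<le> pi^2" using one_le_power[of pi 2] pi_gt3 by simp
  then have "?c^2 * 3 \<le> ?c^2 * (4 * pi^2)" by (intro mult_left_mono) auto
  also have "\<dots> \<le> 4 * pi^2 * (?c * (?c + 1))"
    using c by (simp add: power2_eq_square algebra_simps)
  also have "\<dots> = 4 * pi^2 * (?w * ?S) * 3" unfolding weight_S by simp
  also have "\<dots> \<le> 4 * pi^2 * (?w * Q) * 3" using S_le_Q w0 by (intro mult_right_mono mult_left_mono) auto
  finally show ?thesis unfolding norm_eq by (simp add: mult_ac)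
qed

lemma sum_inverse_one_plus_sq_int_interval_le:
  "(\<Sum>k\<in>{- int N..int N}. 1 / (1 + (real_of_int k)^2)) \<le> 5 - 4 / (real N + 1)"
proof (induction N)
  case 0
  then show ?case by simp
next
  case (Suc N)
  have "{- int (Suc N)..int (Suc N)} = insert (int (Suc N)) (insert (- int (Suc N)) {- int N..int N})"
    by auto
  moreover have "(-1 - real N)^2 = (1 + real N)^2" by (simp add: power2_eq_square algebra_simps)
  ultimately have "(\<Sum>k\<in>{- int (Suc N)..int (Suc N)}. 1 / (1 + (real_of_int k)^2)) =
      2 / (1 + (real N + 1)^2) + (\<Sum>k\<in>{- int N..int N}. 1 / (1 + (real_of_int k)^2))"
    by (simp add: add.commute)
  moreover have "2 / (1 + (real N + 1)^2) \<le> 4 / (real N + 1) - 4 / (real N + 2)"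
  proof -
    have "2 * ((real N + 1) * (real N + 2)) \<le> 4 * (1 + (real N + 1)^2)"
      by (simp add: power2_eq_square algebra_simps)
    moreover have "0 < 1 + (real N + 1)^2" by (simp add: add_pos_nonneg)
    ultimately have "2 / (1 + (real N + 1)^2) \<le> 4 / ((real N + 1) * (real N + 2))"
      by (simp add: divide_simps)
    also have "\<dots> = 4 / (real N + 1) - 4 / (real N + 2)" by (simp add: field_simps)
    finally show ?thesis .
  qed
  ultimately show ?case using Suc.IH by (simp add: add.commute)
qed

lemma sum_inverse_one_plus_sq_int_le:
  assumes "finite (K :: int set)"
  shows "(\<Sum>k\<in>K. 1 / (1 + (real_of_int k)^2)) \<le> 5"
proof -
  obtain M where "abs ` K \<subseteq> {..M}" using assms finite_int_iff_bounded_le by blast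
  then have K: "K \<subseteq> {- int (nat M)..int (nat M)}" by force
  have "(\<Sum>k\<in>K. 1 / (1 + (real_of_int k)^2)) \<le> (\<Sum>k\<in>{- int (nat M)..int (nat M)}. 1 / (1 + (real_of_int k)^2))"
    by (rule sum_mono2[OF _ K]) auto
  also have "\<dots> \<le> 5"
    using sum_inverse_one_plus_sq_int_interval_le[of "nat M"] by (smt (verit) divide_nonneg_nonneg of_nat_0_le_iff)
  finally show ?thesis .
qed

text \<open>The cells \<open>[k\<delta>, (k+1)\<delta>)\<close> contain at most one point each, so the sum is dominated by
  \<open>\<Sum>\<^sub>k B/(1+k\<^sup>2)\<close>.\<close>
lemma sum_le_of_separated:
  fixes x h :: "'a \<Rightarrow> real"
  assumes fin: "finite T" and "\<delta> > 0" and "0 \<le> B"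
    and sep: "\<And>t t'. t \<in> T \<Longrightarrow> t' \<in> T \<Longrightarrow> t \<noteq> t' \<Longrightarrow> \<delta> \<le> \<bar>x t - x t'\<bar>"
    and decay: "\<And>t (k::int). t \<in> T \<Longrightarrow> (\<bar>real_of_int k\<bar> - 1) * \<delta> \<le> \<bar>x t\<bar> \<Longrightarrow>
                  h t \<le> B / (1 + (real_of_int k)^2)"
  shows "(\<Sum>t\<in>T. h t) \<le> 5 * B"
proof -
  define cell where "cell t = \<lfloor>x t / \<delta>\<rfloor>" for t
  have cell_bounds: "real_of_int (cell t) * \<delta> \<le> x t" "x t < (real_of_int (cell t) + 1) * \<delta>" for t
    using \<open>\<delta> > 0\<close> unfolding cell_def
    by (simp_all add: pos_le_divide_eq[symmetric] pos_divide_less_eq[symmetric])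
  have "inj_on cell T"
  proof (rule inj_onI, rule ccontr)
    fix t t' assume "t \<in> T" "t' \<in> T" "cell t = cell t'" "t \<noteq> t'"
    with cell_bounds[of t] cell_bounds[of t'] sep show False
      by (smt (verit, best) distrib_right mult_cancel_right1)
  qed
  have "(\<bar>real_of_int (cell t)\<bar> - 1) * \<delta> \<le> \<bar>x t\<bar>" for t
    using cell_bounds[of t] \<open>\<delta> > 0\<close> by (cases "cell t \<ge> 0") (auto simp: algebra_simps)
  then have "(\<Sum>t\<in>T. h t) \<le> (\<Sum>t\<in>T. B / (1 + (real_of_int (cell t))^2))"
    by (intro sum_mono decay)
  also have "\<dots> = B * (\<Sum>k\<in>cell ` T. 1 / (1 + (real_of_int k)^2))"
    by (simp add: sum.reindex[OF \<open>inj_on cell T\<close>] sum_distrib_left)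
  also have "\<dots> \<le> B * 5"
    using fin \<open>0 \<le> B\<close> by (intro mult_left_mono sum_inverse_one_plus_sq_int_le) auto
  finally show ?thesis by simp
qed

lemma sq_mult_one_plus_sq_le:
  fixes q R k :: real
  assumes "0 \<le> q" "q \<le> R" "q * (\<bar>k\<bar> - 1) \<le> R"
  shows "q^2 * (1 + k^2) \<le> 5 * R^2"
proof (cases "\<bar>k\<bar> \<le> 2")
  case True
  then have "k^2 \<le> 2^2" by (metis abs_ge_zero power2_abs power_mono)
  then have "q^2 * (1 + k^2) \<le> q^2 * 5" using assms by (intro mult_left_mono) auto
  moreover have "q^2 \<le> R^2" using assms by (intro power_mono) auto
  ultimately show ?thesis by linarith
next
  case False
  then have "q * \<bar>k\<bar> \<le> q * (2 * (\<bar>k\<bar> - 1))" using assms by (intro mult_left_mono) auto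
  also have "\<dots> \<le> 2 * R" using assms by linarith
  finally have "(q * \<bar>k\<bar>)^2 \<le> (2 * R)^2" using assms by (intro power_mono) auto
  moreover have "q^2 \<le> R^2" using assms by (intro power_mono) auto
  ultimately show ?thesis by (simp add: power_mult_distrib algebra_simps)
qed

lemma powr_neg_half_le_inverse:
  fixes X c :: real
  assumes "0 < c" "c^2 \<le> X"
  shows "X powr (-1/2) \<le> 1 / c"
proof -
  have X0: "0 < X" using assms by (meson order_less_le_trans zero_less_power)
  have "(X powr (-1/2))^2 = X powr (-1/2 + -1/2)" by (simp only: power2_eq_square powr_add)
  also have "\<dots> = 1 / X" using X0 by (simp add: powr_neg_one)
  also have "\<dots> \<le> 1 / c^2" using assms X0 by (intro divide_left_mono) auto
  also have "\<dots> = (1/c)^2" by (simp add: power_divide)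
  finally show ?thesis by (rule power2_le_imp_le) (use assms in auto)
qed

context
  fixes a b c :: int and \<kappa> :: real
  assumes a: "0 \<le> a" and b: "0 \<le> b" and c: "1 \<le> c"
    and abc: "real_of_int (a+b+c) \<le> 3 * real_of_int c"
    and \<kappa>: "0 \<le> \<kappa>" "\<kappa> \<le> 1 / real_of_int c"
begin

lemma scaled_frequency_le: "\<kappa> * (2*pi*real_of_int (a+b+c)) \<le> 6*pi"
proof -
  have "\<kappa> * (2*pi*real_of_int (a+b+c)) \<le> (1 / real_of_int c) * (2*pi*(3 * real_of_int c))"
    using \<kappa> abc a b c by (intro mult_mono) auto
  also have "\<dots> = 6*pi" using c by simp
  finally show ?thesis .
qed

lemma scaled_higher_deriv_dirichlet3_le:
  assumes j: "j \<le> 4"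
  shows "\<kappa>^j * norm (higher_deriv j (dirichlet3 a b c) y) \<le> (6*pi)^4"
    and "\<kappa>^j * norm (higher_deriv j (dirichlet3 a b c) y) * norm (1 - exp (\<i> * of_real (2*pi*y)))
           * real_of_int c \<le> 18 * (6*pi)^4"
proof -
  let ?m = "real_of_int (a+b+c)"
  have "\<kappa>^j * (2*pi*?m)^j = (\<kappa> * (2*pi*?m))^j" by (simp add: power_mult_distrib)
  also have "\<dots> \<le> (6*pi)^j" using scaled_frequency_le \<kappa> a b c by (intro power_mono) auto
  also have "\<dots> \<le> (6*pi)^4" using j pi_gt3 by (intro power_increasing) auto
  finally have main: "\<kappa>^j * (2*pi*?m)^j \<le> (6*pi)^4" .
  show "\<kappa>^j * norm (higher_deriv j (dirichlet3 a b c) y) \<le> (6*pi)^4"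
    using mult_left_mono[OF norm_higher_deriv_dirichlet3_le[of a b c j y], of "\<kappa>^j"] main \<kappa> a b c
    by auto
  have "\<kappa>^j * norm (higher_deriv j (dirichlet3 a b c) y) * norm (1 - exp (\<i> * of_real (2*pi*y)))
      \<le> \<kappa>^j * (2 * (1 + 2 * real j) * (2*pi*?m)^j / real_of_int (2*c+1))"
    using mult_left_mono[OF norm_higher_deriv_dirichlet3_mult_le[of a b c j y], of "\<kappa>^j"] \<kappa> a b c
    by (simp only: mult.assoc) simp
  also have "\<dots> = 2 * (1 + 2 * real j) * (\<kappa>^j * (2*pi*?m)^j) / real_of_int (2*c+1)" by simp
  also have "\<dots> \<le> 18 * (6*pi)^4 / real_of_int (2*c+1)"
    using main j c \<kappa> a b by (intro divide_right_mono mult_mono) auto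
  finally have "\<kappa>^j * norm (higher_deriv j (dirichlet3 a b c) y) * norm (1 - exp (\<i> * of_real (2*pi*y)))
      * real_of_int c \<le> 18 * (6*pi)^4 / real_of_int (2*c+1) * real_of_int c"
    using c by (intro mult_right_mono) auto
  also have "\<dots> \<le> 18 * (6*pi)^4" using c by (simp add: field_simps)
  finally show "\<kappa>^j * norm (higher_deriv j (dirichlet3 a b c) y) * norm (1 - exp (\<i> * of_real (2*pi*y)))
      * real_of_int c \<le> 18 * (6*pi)^4" .
qed

lemma scaled_higher_deriv_dirichlet3_sq_le:
  assumes j: "j \<le> 4" and "0 < \<delta>" and c\<delta>: "1/3 \<le> real_of_int c * \<delta>"
    and y: "(\<bar>real_of_int k\<bar> - 1) * \<delta> \<le> \<bar>y - of_int (round y)\<bar>"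
  shows "(\<kappa>^j * norm (higher_deriv j (dirichlet3 a b c) y))^2
           \<le> 5 * (54 * (6*pi)^4)^2 / (1 + (real_of_int k)^2)"
proof -
  define q where "q = \<kappa>^j * norm (higher_deriv j (dirichlet3 a b c) y)"
  define E where "E = norm (1 - exp (\<i> * of_real (2*pi*y)))"
  have q0: "0 \<le> q" unfolding q_def using \<kappa> by simp
  have q_le: "q \<le> (6*pi)^4" unfolding q_def by (rule scaled_higher_deriv_dirichlet3_le(1)[OF j])
  have qE: "q * E * real_of_int c \<le> 18 * (6*pi)^4"
    unfolding q_def E_def by (rule scaled_higher_deriv_dirichlet3_le(2)[OF j])
  have "q * (\<bar>real_of_int k\<bar> - 1) \<le> 54 * (6*pi)^4"
  proof (cases "\<bar>real_of_int k\<bar> \<le> 1")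
    case True
    then have "q * (\<bar>real_of_int k\<bar> - 1) \<le> 0" using q0 by (simp add: mult_nonneg_nonpos)
    also have "0 \<le> 54 * (6*pi)^4" by simp
    finally show ?thesis .
  next
    case False
    have "(\<bar>real_of_int k\<bar> - 1) * (1/3) \<le> real_of_int c * ((\<bar>real_of_int k\<bar> - 1) * \<delta>)"
      using False c\<delta> mult_left_mono[OF c\<delta>, of "\<bar>real_of_int k\<bar> - 1"] by (simp add: mult_ac)
    also have "\<dots> \<le> real_of_int c * E"
      using y dist_round_le_norm_1_minus_exp_2pi[of y] c unfolding E_def by (intro mult_left_mono) auto
    finally have "q * ((\<bar>real_of_int k\<bar> - 1) * (1/3)) \<le> q * (real_of_int c * E)"
      using q0 by (intro mult_left_mono)
    then show ?thesis using qE by (simp add: algebra_simps)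
  qed
  moreover have "q \<le> 54 * (6*pi)^4" using q_le by (smt (verit) zero_le_power pi_gt_zero)
  ultimately have "q^2 * (1 + (real_of_int k)^2) \<le> 5 * (54 * (6*pi)^4)^2"
    using sq_mult_one_plus_sq_le[OF q0] by blast
  moreover have "0 < 1 + (real_of_int k)^2" by (simp add: add_pos_nonneg)
  ultimately show ?thesis unfolding q_def[symmetric] by (simp add: pos_le_divide_eq)
qed

end

lemma wrap_dist_le_abs_diff_frac:
  "wrap_dist t t' \<le> \<bar>((f - t) - of_int (round (f - t))) - ((f - t') - of_int (round (f - t')))\<bar>"
proof -
  have "wrap_dist t t' \<le> \<bar>(t - t') - of_int (round (f - t') - round (f - t))\<bar>"
    unfolding wrap_dist_def by (rule round_diff_minimal)
  also have "\<dots> = \<bar>((f - t) - of_int (round (f - t))) - ((f - t') - of_int (round (f - t')))\<bar>"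
    by (simp add: abs_minus_commute algebra_simps)
  finally show ?thesis .
qed

lemma kappa_le_inverse:
  assumes "Kbar n = dirichlet3 a b c" "0 \<le> a" "0 \<le> b" "1 \<le> c"
  shows "kappa n \<le> 1 / real_of_int c"
  unfolding kappa_def assms(1)
  using assms(2-4) sq_le_norm_higher_deriv2_dirichlet3[of a b c]
  by (intro powr_neg_half_le_inverse) auto

lemma vbar_norm_le_of_dirichlet3:
  assumes K: "Kbar n = dirichlet3 a b c"
    and a: "0 \<le> a" and b: "0 \<le> b" and c: "1 \<le> c"
    and abc: "real_of_int (a+b+c) \<le> 3 * real_of_int c"
    and "finite T" and "0 < \<delta>" and c\<delta>: "1/3 \<le> real_of_int c * \<delta>"
    and sep: "\<And>t t'. t \<in> T \<Longrightarrow> t' \<in> T \<Longrightarrow> t \<noteq> t' \<Longrightarrow> \<delta> \<le> wrap_dist t t'"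
    and l: "l \<le> 3"
  shows "vbar_norm n T l f \<le> sqrt (50 * (54 * (6*pi)^4)^2)"
proof -
  let ?R = "5 * (54 * (6*pi)^4)^2"
  define x where "x t = (f - t) - of_int (round (f - t))" for t
  have \<kappa>: "0 \<le> kappa n" "kappa n \<le> 1 / real_of_int c"
    using kappa_le_inverse[OF K a b c] by (auto simp: kappa_def)
  have sep_x: "\<delta> \<le> \<bar>x t - x t'\<bar>" if "t \<in> T" "t' \<in> T" "t \<noteq> t'" for t t'
    using sep[OF that] wrap_dist_le_abs_diff_frac[of t t' f] unfolding x_def by linarith
  have term_le: "(norm (complex_of_real (kappa n ^ l) * higher_deriv l (Kbar n) (f - t)))\<^sup>2 +
      (norm (complex_of_real (kappa n ^ l * kappa n) * higher_deriv (Suc l) (Kbar n) (f - t)))\<^sup>2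
      \<le> 2 * ?R / (1 + (real_of_int k)^2)"
    if "(\<bar>real_of_int k\<bar> - 1) * \<delta> \<le> \<bar>x t\<bar>" for t k
  proof -
    have bound: "(kappa n ^ j * norm (higher_deriv j (Kbar n) (f - t)))^2 \<le> ?R / (1 + (real_of_int k)^2)"
      if "j \<le> 4" for j
      unfolding K using that \<open>0 < \<delta>\<close> c\<delta> \<open>(\<bar>real_of_int k\<bar> - 1) * \<delta> \<le> \<bar>x t\<bar>\<close>
      by (intro scaled_higher_deriv_dirichlet3_sq_le[OF a b c abc \<kappa>]) (auto simp: x_def)
    have "norm (complex_of_real (kappa n ^ l) * higher_deriv l (Kbar n) (f - t)) =
        kappa n ^ l * norm (higher_deriv l (Kbar n) (f - t))"
      "norm (complex_of_real (kappa n ^ l * kappa n) * higher_deriv (Suc l) (Kbar n) (f - t)) =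
        kappa n ^ Suc l * norm (higher_deriv (Suc l) (Kbar n) (f - t))"
      using \<kappa>(1) by (simp_all only: norm_mult norm_of_real power_Suc2 abs_of_nonneg zero_le_power
          mult_nonneg_nonneg)
    with bound[of l] bound[of "Suc l"] l show ?thesis by (simp only:) (simp add: add_divide_distrib)
  qed
  have "(\<Sum>t\<in>T. (norm (complex_of_real (kappa n ^ l) * higher_deriv l (Kbar n) (f - t)))\<^sup>2 +
      (norm (complex_of_real (kappa n ^ l * kappa n) * higher_deriv (Suc l) (Kbar n) (f - t)))\<^sup>2)
      \<le> 5 * (2 * ?R)"
    by (rule sum_le_of_separated[OF \<open>finite T\<close> \<open>0 < \<delta>\<close> _ sep_x term_le]) simp
  then show ?thesis unfolding vbar_norm_def by (intro real_sqrt_le_mono) simp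
qed

lemma m_of_ge:
  assumes "n \<ge> 2"
  shows "real n - 1 \<le> 2 * real (m_of n) + 1"
  using assms unfolding m_of_def by (auto elim: oddE evenE)

theorem lemmaG3:
  shows "\<exists>C::real. \<forall>(n::nat) (T::real set) (f::real) (l::nat).
    n \<ge> 2000 \<and>
    0.247 * real (m_of n) \<in> \<int> \<and> 0.339 * real (m_of n) \<in> \<int> \<and> 0.414 * real (m_of n) \<in> \<int> \<and>
    finite T \<and> T \<subseteq> {0..<1} \<and>
    (\<forall>t\<in>T. \<forall>t'\<in>T. t \<noteq> t' \<longrightarrow> wrap_dist t t' \<ge> 2.52 / (real n - 1)) \<and>
    f \<in> {0..1} \<and> l \<le> 3
    \<longrightarrow> vbar_norm n T l f \<le> C"
proof (intro exI allI impI, elim conjE)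
  fix n :: nat and T :: "real set" and f :: real and l :: nat
  assume n: "n \<ge> 2000" and ints: "0.247 * real (m_of n) \<in> \<int>" "0.339 * real (m_of n) \<in> \<int>"
    "0.414 * real (m_of n) \<in> \<int>" and "finite T"
    and sep: "\<forall>t\<in>T. \<forall>t'\<in>T. t \<noteq> t' \<longrightarrow> wrap_dist t t' \<ge> 2.52 / (real n - 1)" and "l \<le> 3"
  define m where "m = real (m_of n)"
  define c where "c = \<lfloor>0.414 * m\<rfloor>"
  have floor_eq: "real_of_int \<lfloor>x\<rfloor> = x" if "x \<in> \<int>" for x :: real
    using that by (metis Ints_cases floor_of_int)
  have coeffs: "real_of_int \<lfloor>0.247 * m\<rfloor> = 0.247 * m" "real_of_int \<lfloor>0.339 * m\<rfloor> = 0.339 * m"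
    "real_of_int c = 0.414 * m" using ints unfolding c_def m_def by (simp_all add: floor_eq)
  have "real n - 1 \<le> 3 * m" "real n \<ge> 2000" using m_of_ge[of n] n unfolding m_def by auto
  then have "1 \<le> c" "1/3 \<le> real_of_int c * (2.52 / (real n - 1))"
    using coeffs(3) by (simp_all add: field_simps)
  moreover have "Kbar n = dirichlet3 \<lfloor>0.247 * m\<rfloor> \<lfloor>0.339 * m\<rfloor> c"
    unfolding Kbar_def dirichlet3_def[abs_def] c_def m_def ..
  ultimately show "vbar_norm n T l f \<le> sqrt (50 * (54 * (6*pi)^4)^2)"
    using \<open>finite T\<close> sep \<open>l \<le> 3\<close> n coeffs m_def
    by (intro vbar_norm_le_of_dirichlet3) (auto simp flip: of_int_le_iff)
qed

end
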